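(* Let $p$ be an odd prime such that $3\mid p-1$ and $p\nmid 2^{(p-1)/3}-1$. Then there do not exist integers $r$ with $0<r<p-1$ and positive integers $e$ with $\gcd(e,3)=1$ and $\gcd\big(r,\tfrac{p-1}{3}\big)=1$ such that $x^r\big(x^{e(p-1)/3}+1\big)$ is a permutation polynomial of $\mathbb{F}_p$.
   Context: A permutation polynomial of $\mathbb{F}_p$ is a polynomial inducing a bijection $\mathbb{F}_p\to\mathbb{F}_p$. *)

theory Defs
  imports "HOL-Computational_Algebra.Polynomial" "HOL-Computational_Algebra.Primes"
begin

definition perm_poly_mod :: "nat \<Rightarrow> int poly \<Rightarrow> bool" where
  "perm_poly_mod p f \<longleftrightarrow>
     bij_betw (\<lambda>x. poly f x mod int p) {0..<int p} {0..<int p}"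

end

theory Submission
  imports Defs "HOL-Number_Theory.Cong"
begin

text \<open>Put d = (p - 1)/3 and F(x) = x^r (x^{ed} + 1). Then F(x)^d = G(x^d) for the induced map
  G(u) = u^r (u^e + 1)^d, and x^d is always a cube root of unity. If F permuted F_p, we could
  pick x0 with F(x0) = 1 and put y = x0^d; then G(y) = 1, and y \<noteq> 1 because G(1) = 2^d \<noteq> 1.
  Hence z = y^e is a primitive cube root of unity, and since d is even, z^2 + 1 = -z and
  (z + 1)^2 = z give G(y^2) = G(y)^2 = 1. So F maps both fibres {x^d = y} and {x^d = y^2} of
  x \<mapsto> x^d into the fibre {x^d = 1}, which is no larger than either of them: F is not injective.\<close>

lemma power_power_commute: "(a ^ m) ^ n = (a ^ n) ^ m" for a :: "'a::monoid_mult"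
  by (simp flip: power_mult add: mult.commute)

(* Fermat's little theorem is proved here rather than taken from Residues: importing that theory
   (via HOL-Algebra) would shadow Polynomial.monom in the statement of the theorem. *)
lemma add_one_power_prime_cong:
  fixes a :: int
  assumes "prime p"
  shows "[(a + 1) ^ p = a ^ p + 1] (mod int p)"
proof -
  have "p > 0"
    using assms prime_gt_0_nat by blast
  have "(a + 1) ^ p = (\<Sum>k\<le>p. of_nat (p choose k) * a ^ k)"
    by (simp add: binomial_ring)
  also have "[\<dots> = (\<Sum>k\<le>p. if k = 0 \<or> k = p then of_nat (p choose k) * a ^ k else 0)] (mod int p)"
  proof (rule cong_sum)
    fix k assume "k \<in> {..p}"
    then have "k = 0 \<or> k = p \<or> p dvd (p choose k)"
      using assms dvd_choose_prime[of k p] by force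
    then show "[of_nat (p choose k) * a ^ k
        = (if k = 0 \<or> k = p then of_nat (p choose k) * a ^ k else 0)] (mod int p)"
      by (auto simp: cong_0_iff int_dvd_int_iff)
  qed
  also have "(\<Sum>k\<le>p. if k = 0 \<or> k = p then of_nat (p choose k) * a ^ k else 0)
      = (\<Sum>k\<in>{0, p}. of_nat (p choose k) * a ^ k)"
    by (rule sum.mono_neutral_cong_right) auto
  also have "\<dots> = a ^ p + 1"
    using \<open>p > 0\<close> by simp
  finally show ?thesis .
qed

lemma fermat_little_nat_cong:
  assumes "prime p"
  shows "[int n ^ p = int n] (mod int p)"
proof (induction n)
  case 0
  have "p > 0"
    using assms prime_gt_0_nat by blast
  then show ?case
    by (simp add: zero_power)
next
  case (Suc n)
  have "[(int n + 1) ^ p = int n ^ p + 1] (mod int p)"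
    using assms by (rule add_one_power_prime_cong)
  also have "[int n ^ p + 1 = int n + 1] (mod int p)"
    using Suc.IH by (rule cong_add) simp
  finally show ?case
    by (simp add: add.commute)
qed

lemma fermat_theorem_int:
  fixes p :: nat and x :: int
  assumes "prime p" and "\<not> int p dvd x"
  shows "[x ^ (p - 1) = 1] (mod int p)"
proof -
  define n where "n = nat (x mod int p)"
  have x_n: "[x = int n] (mod int p)"
    using assms(1) by (simp add: n_def cong_def prime_gt_0_nat)
  have "prime (int p)"
    using assms(1) by simp
  then have "coprime x (int p)"
    using prime_imp_coprime[of "int p" x] assms(2) by (simp add: coprime_commute)
  have "[x * x ^ (p - 1) = x * 1] (mod int p)"
    using fermat_little_nat_cong[OF assms(1), of n] x_n prime_gt_0_nat[OF assms(1)]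
    by (simp flip: power_Suc) (metis cong_pow cong_sym cong_trans)
  with \<open>coprime x (int p)\<close> show ?thesis
    using cong_mult_lcancel by blast
qed

definition power_fiber :: "int \<Rightarrow> nat \<Rightarrow> int \<Rightarrow> int set" where
  "power_fiber P d a = {x \<in> {0..<P}. [x ^ d = a] (mod P)}"

lemma finite_power_fiber [simp]: "finite (power_fiber P d a)"
  unfolding power_fiber_def by (rule finite_subset[of _ "{0..<P}"]) auto

lemma power_fibers_disjoint:
  "\<not> [a = b] (mod P) \<Longrightarrow> power_fiber P d a \<inter> power_fiber P d b = {}"
  unfolding power_fiber_def by (auto dest: cong_sym cong_trans)

lemma card_power_fiber_one_le:
  assumes "coprime c P"
  shows "card (power_fiber P d 1) \<le> card (power_fiber P d (c ^ d))"
proof (rule card_inj_on_le)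
  show "inj_on (\<lambda>t. c * t mod P) (power_fiber P d 1)"
  proof
    fix s t assume st: "s \<in> power_fiber P d 1" "t \<in> power_fiber P d 1"
      and "c * s mod P = c * t mod P"
    then have "[s = t] (mod P)"
      using assms cong_mult_lcancel unfolding cong_def by blast
    with st show "s = t"
      unfolding power_fiber_def by (auto intro: cong_less_imp_eq_int)
  qed
  show "(\<lambda>t. c * t mod P) ` power_fiber P d 1 \<subseteq> power_fiber P d (c ^ d)"
  proof clarify
    fix t assume t: "t \<in> power_fiber P d 1"
    have "[(c * t mod P) ^ d = (c * t) ^ d] (mod P)"
      by (intro cong_pow) (simp add: cong_def)
    also have "(c * t) ^ d = c ^ d * t ^ d"
      by (simp add: power_mult_distrib)
    also have "[c ^ d * t ^ d = c ^ d * 1] (mod P)"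
      using t unfolding power_fiber_def by (intro cong_mult) auto
    finally show "c * t mod P \<in> power_fiber P d (c ^ d)"
      using t unfolding power_fiber_def by simp
  qed
qed simp

lemma not_inj_on_mod_if_power_fibers_collide:
  fixes f :: "int \<Rightarrow> int"
  assumes "P > 1" and "coprime c P" and "coprime c' P" and "\<not> [c ^ d = c' ^ d] (mod P)"
    and "\<And>x. x \<in> power_fiber P d (c ^ d) \<union> power_fiber P d (c' ^ d) \<Longrightarrow> [f x ^ d = 1] (mod P)"
  shows "\<not> inj_on (\<lambda>x. f x mod P) {0..<P}"
proof
  let ?A = "power_fiber P d (c ^ d)" and ?B = "power_fiber P d (c' ^ d)"
    and ?T = "power_fiber P d 1"
  assume inj: "inj_on (\<lambda>x. f x mod P) {0..<P}"
  have "card (?A \<union> ?B) \<le> card ?T"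
  proof (rule card_inj_on_le)
    show "inj_on (\<lambda>x. f x mod P) (?A \<union> ?B)"
      by (rule inj_on_subset[OF inj]) (auto simp: power_fiber_def)
    show "(\<lambda>x. f x mod P) ` (?A \<union> ?B) \<subseteq> ?T"
    proof clarify
      fix x assume "x \<in> ?A \<union> ?B"
      then have "[(f x mod P) ^ d = 1] (mod P)"
        using assms(5) by (simp add: cong_def power_mod)
      then show "f x mod P \<in> ?T"
        using assms(1) by (simp add: power_fiber_def)
    qed
  qed simp
  moreover have "card (?A \<union> ?B) = card ?A + card ?B"
    using power_fibers_disjoint[OF assms(4)] by (simp add: card_Un_disjoint)
  moreover have "card ?T \<le> card ?A" "card ?T \<le> card ?B"
    using card_power_fiber_one_le assms(2,3) by blast+
  moreover have "card ?T > 0"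
  proof -
    have "1 \<in> ?T"
      using assms(1) by (simp add: power_fiber_def)
    then show ?thesis
      using card_gt_0_iff by (metis empty_iff finite_power_fiber)
  qed
  ultimately show False by linarith
qed

lemma cube_root_of_unity_power_mod_3:
  fixes y P :: int
  assumes "[y ^ 3 = 1] (mod P)"
  shows "[y ^ e = y ^ (e mod 3)] (mod P)"
proof -
  have "y ^ e = (y ^ 3) ^ (e div 3) * y ^ (e mod 3)"
    by (simp flip: power_mult power_add)
  also have "[\<dots> = 1 ^ (e div 3) * y ^ (e mod 3)] (mod P)"
    using assms by (intro cong_mult cong_pow) auto
  finally show ?thesis by simp
qed

lemma primitive_cube_root_of_unity_power:
  fixes y P :: int
  assumes "[y ^ 3 = 1] (mod P)" and "\<not> [y = 1] (mod P)" and "\<not> 3 dvd e"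
  shows "\<not> [y ^ e = 1] (mod P)"
proof
  assume "[y ^ e = 1] (mod P)"
  then have ye: "[y ^ (e mod 3) = 1] (mod P)"
    using cube_root_of_unity_power_mod_3[OF assms(1)] by (metis cong_sym cong_trans)
  have "e mod 3 = 1 \<or> e mod 3 = 2"
    using assms(3) by presburger
  then consider "e mod 3 = 1" | "e mod 3 = 2"
    by blast
  then show False
  proof cases
    case 1
    with ye assms(2) show False by simp
  next
    case 2
    have "[y ^ 3 = y * y ^ 2] (mod P)"
      by (simp add: power3_eq_cube power2_eq_square mult.assoc)
    also have "[y * y ^ 2 = y * 1] (mod P)"
      using ye 2 by (intro cong_mult) auto
    finally show False
      using assms(1,2) by (metis cong_sym cong_trans mult_1_right)
  qed
qed

lemma primitive_cube_root_of_unity_sum: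
  fixes z P :: int
  assumes "prime P" and "[z ^ 3 = 1] (mod P)" and "\<not> [z = 1] (mod P)"
  shows "[z ^ 2 + z + 1 = 0] (mod P)"
proof -
  have "P dvd (z - 1) * (z ^ 2 + z + 1)"
    using assms(2) by (simp add: cong_iff_dvd_diff algebra_simps power2_eq_square power3_eq_cube)
  moreover have "\<not> P dvd z - 1"
    using assms(3) by (simp add: cong_iff_dvd_diff)
  ultimately show ?thesis
    using assms(1) by (simp add: prime_dvd_mult_iff cong_0_iff)
qed

lemma even_power_identity_at_cube_root:
  fixes z P :: int
  assumes "[z ^ 2 + z + 1 = 0] (mod P)" and "even d"
  shows "[(z ^ 2 + 1) ^ d = ((z + 1) ^ d) ^ 2] (mod P)"
proof -
  have "[(z ^ 2 + z + 1) - z = 0 - z] (mod P)"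
    using assms(1) by (intro cong_diff) auto
  then have neg: "[z ^ 2 + 1 = - z] (mod P)"
    by simp
  have "[(z ^ 2 + z + 1) + z = 0 + z] (mod P)"
    using assms(1) by (intro cong_add) auto
  then have sq: "[z = (z + 1) ^ 2] (mod P)"
    by (simp add: cong_sym_eq power2_eq_square algebra_simps)
  have "[(z ^ 2 + 1) ^ d = (- z) ^ d] (mod P)"
    using neg by (rule cong_pow)
  also have "(- z) ^ d = z ^ d"
    using assms(2) by simp
  also have "[z ^ d = ((z + 1) ^ 2) ^ d] (mod P)"
    using sq by (rule cong_pow)
  also have "((z + 1) ^ 2) ^ d = ((z + 1) ^ d) ^ 2"
    by (simp flip: power_mult add: mult.commute)
  finally show ?thesis .
qed

lemma unit_not_cong_square:
  fixes y P :: int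
  assumes "prime P" and "coprime y P" and "\<not> [y = 1] (mod P)"
  shows "\<not> [y = y ^ 2] (mod P)"
proof
  assume "[y = y ^ 2] (mod P)"
  then have "[y * 1 = y * y] (mod P)"
    by (simp add: power2_eq_square)
  then have "[1 = y] (mod P)"
    using assms(2) cong_mult_lcancel by blast
  with assms(3) show False
    by (simp add: cong_sym_eq)
qed

definition induced_map :: "nat \<Rightarrow> nat \<Rightarrow> nat \<Rightarrow> int \<Rightarrow> int" where
  "induced_map r e d u = u ^ r * (u ^ e + 1) ^ d"

lemma induced_map_power: "(x ^ r * (x ^ (e * d) + 1)) ^ d = induced_map r e d (x ^ d)"
  by (simp add: induced_map_def power_mult_distrib power_power_commute flip: power_mult)
    (simp add: mult.commute)

lemma induced_map_cong:
  "[u = v] (mod P) \<Longrightarrow> [induced_map r e d u = induced_map r e d v] (mod P)"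
  unfolding induced_map_def by (intro cong_mult cong_pow cong_add) auto

lemma induced_map_square_at_cube_root:
  fixes y P :: int
  assumes "prime P" and "[y ^ 3 = 1] (mod P)" and "\<not> [y = 1] (mod P)"
    and "\<not> 3 dvd e" and "even d"
  shows "[induced_map r e d (y ^ 2) = induced_map r e d y ^ 2] (mod P)"
proof -
  define z where "z = y ^ e"
  have "[z ^ 3 = 1 ^ e] (mod P)"
    using cong_pow[OF assms(2), of e] by (simp add: z_def flip: power_mult mult.commute)
  then have "[z ^ 2 + z + 1 = 0] (mod P)"
    using primitive_cube_root_of_unity_sum[OF assms(1)]
      primitive_cube_root_of_unity_power[OF assms(2,3,4)] z_def by simp
  then have "[(y ^ r) ^ 2 * (z ^ 2 + 1) ^ d = (y ^ r) ^ 2 * ((z + 1) ^ d) ^ 2] (mod P)"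
    using even_power_identity_at_cube_root assms(5) by (intro cong_mult) auto
  then show ?thesis
    by (simp add: induced_map_def z_def power_mult_distrib flip: power_mult) (simp add: mult.commute)
qed

lemma not_inj_on_mod_if_value_one:
  fixes P x0 :: int
  assumes "prime P" and "even d" and "\<not> 3 dvd e" and "\<not> [2 ^ d = 1] (mod P)"
    and "coprime x0 P" and "[x0 ^ (3 * d) = 1] (mod P)"
    and "[x0 ^ r * (x0 ^ (e * d) + 1) = 1] (mod P)"
  shows "\<not> inj_on (\<lambda>x. x ^ r * (x ^ (e * d) + 1) mod P) {0..<P}"
proof -
  define y where "y = x0 ^ d"
  let ?G = "induced_map r e d"
  have "y ^ 3 = x0 ^ (3 * d)"
    unfolding y_def by (metis power_mult mult.commute)
  with assms(6) have "[y ^ 3 = 1] (mod P)"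
    by simp
  have "[(x0 ^ r * (x0 ^ (e * d) + 1)) ^ d = 1 ^ d] (mod P)"
    using assms(7) by (rule cong_pow)
  then have G_y: "[?G y = 1] (mod P)"
    by (simp add: induced_map_power y_def)
  have "\<not> [y = 1] (mod P)"
  proof
    assume "[y = 1] (mod P)"
    then have "[?G 1 = 1] (mod P)"
      using induced_map_cong G_y by (metis cong_sym cong_trans)
    with assms(4) show False
      by (simp add: induced_map_def)
  qed
  have "[?G (y ^ 2) = ?G y ^ 2] (mod P)"
    using assms(1) \<open>[y ^ 3 = 1] (mod P)\<close> \<open>\<not> [y = 1] (mod P)\<close> assms(3,2)
    by (rule induced_map_square_at_cube_root)
  also have "[?G y ^ 2 = 1 ^ 2] (mod P)"
    using G_y by (rule cong_pow)
  finally have G_y2: "[?G (y ^ 2) = 1] (mod P)"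
    by simp
  have "\<not> [y = y ^ 2] (mod P)"
    using unit_not_cong_square assms(1,5) \<open>\<not> [y = 1] (mod P)\<close> by (simp add: y_def)
  moreover have "[(x ^ r * (x ^ (e * d) + 1)) ^ d = 1] (mod P)"
    if "x \<in> power_fiber P d y \<union> power_fiber P d (y ^ 2)" for x
  proof -
    from that have "[x ^ d = y] (mod P) \<or> [x ^ d = y ^ 2] (mod P)"
      by (auto simp: power_fiber_def)
    then have "[?G (x ^ d) = 1] (mod P)"
      using induced_map_cong G_y G_y2 cong_trans by blast
    then show ?thesis
      by (simp add: induced_map_power)
  qed
  moreover have "P > 1"
    using assms(1) prime_gt_1_int by blast
  ultimately show ?thesis
    using not_inj_on_mod_if_power_fibers_collide[OF _ assms(5), of "x0 ^ 2" d] assms(5)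
    by (simp add: y_def power_power_commute[of x0 2 d])
qed

lemma not_bij_betw_mod_prime:
  fixes p :: nat
  assumes "prime p" and "3 * d = p - 1" and "even d" and "0 < r" and "\<not> 3 dvd e"
    and "\<not> [2 ^ d = 1] (mod int p)"
  shows "\<not> bij_betw (\<lambda>x. x ^ r * (x ^ (e * d) + 1) mod int p) {0..<int p} {0..<int p}"
proof
  define P where "P = int p"
  assume bij: "bij_betw (\<lambda>x. x ^ r * (x ^ (e * d) + 1) mod int p) {0..<int p} {0..<int p}"
  have "prime P" and "P > 1"
    using assms(1) prime_gt_1_nat by (auto simp: P_def)
  then have "1 \<in> (\<lambda>x. x ^ r * (x ^ (e * d) + 1) mod P) ` {0..<P}"
    using bij by (simp add: bij_betw_def P_def)
  then obtain x0 where x0: "x0 \<in> {0..<P}" "1 = x0 ^ r * (x0 ^ (e * d) + 1) mod P"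
    by (rule imageE)
  then have "x0 \<noteq> 0"
    using assms(4) by (auto simp: zero_power)
  with x0(1) have "\<not> P dvd x0"
    by (auto dest: zdvd_imp_le)
  then have "coprime x0 P"
    using \<open>prime P\<close> prime_imp_coprime[of P x0] by (simp add: coprime_commute)
  have "[x0 ^ (3 * d) = 1] (mod P)"
    using fermat_theorem_int[OF assms(1)] \<open>\<not> P dvd x0\<close> assms(2) by (simp add: P_def)
  moreover have "[x0 ^ r * (x0 ^ (e * d) + 1) = 1] (mod P)"
    using x0(2) \<open>P > 1\<close> by (simp add: cong_def)
  ultimately have "\<not> inj_on (\<lambda>x. x ^ r * (x ^ (e * d) + 1) mod P) {0..<P}"
    using not_inj_on_mod_if_value_one \<open>prime P\<close> assms(3,5,6) \<open>coprime x0 P\<close>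
    by (simp add: P_def)
  with bij show False
    by (simp add: bij_betw_def P_def)
qed

theorem proposition4p1:
  fixes p :: nat
  assumes "prime p" and "odd p" and "3 dvd (p - 1)"
    and "\<not> (p dvd (2 ^ ((p - 1) div 3) - 1))"
  shows "\<not> (\<exists>r e :: nat. 0 < r \<and> r < p - 1 \<and> 0 < e \<and> gcd e 3 = 1
            \<and> gcd r ((p - 1) div 3) = 1
            \<and> perm_poly_mod p (monom 1 r * (monom 1 (e * ((p - 1) div 3)) + 1)))"
proof
  assume "\<exists>r e :: nat. 0 < r \<and> r < p - 1 \<and> 0 < e \<and> gcd e 3 = 1
            \<and> gcd r ((p - 1) div 3) = 1
            \<and> perm_poly_mod p (monom 1 r * (monom 1 (e * ((p - 1) div 3)) + 1))"
  then obtain r e :: nat where "0 < r" and "gcd e 3 = 1"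
    and perm: "perm_poly_mod p (monom 1 r * (monom 1 (e * ((p - 1) div 3)) + 1))"
    by auto
  define d where "d = (p - 1) div 3"
  have "3 * d = p - 1"
    using assms(3) by (simp add: d_def)
  then have "even (3 * d)"
    using assms(2) by simp
  then have "even d"
    by simp
  have "\<not> 3 dvd e"
    using \<open>gcd e 3 = 1\<close> gcd_greatest_iff[of 3 e 3] by auto
  have "\<not> [2 ^ d = 1] (mod int p)"
    using assms(4) cong_int_iff[of "2 ^ d" 1 p] cong_altdef_nat[of 1 "2 ^ d" p]
    by (simp add: d_def)
  moreover have "bij_betw (\<lambda>x. x ^ r * (x ^ (e * d) + 1) mod int p) {0..<int p} {0..<int p}"
    using perm by (simp add: perm_poly_mod_def d_def poly_monom)
  ultimately show False
    using not_bij_betw_mod_prime assms(1) \<open>3 * d = p - 1\<close> \<open>even d\<close> \<open>0 < r\<close> \<open>\<not> 3 dvd e\<close>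
    by blast
qed

end
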